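(* Let $n\geqslant 2$, let $A$ be a real symmetric $n\times n$ matrix with eigenvalues $\lambda_1(A)\geqslant\lambda_2(A)\geqslant\dots\geqslant\lambda_n(A)$, and let $X_A:=\{x\in\mathbb{R}^n: xx^\top-A\succeq 0\}$. Then $X_A\neq\emptyset$ if and only if $\lambda_2(A)\leqslant 0$.
   Context: $B\succeq 0$ means the symmetric matrix $B$ is positive semidefinite. *)

theory Defs
  imports "Jordan_Normal_Form.Char_Poly" "HOL-Computational_Algebra.Polynomial" "HOL-Library.Multiset"
begin

text \<open>For a real symmetric n x n matrix all n eigenvalues are real, so this list
  has length n and its entry with index (i - 1) is the i-th largest eigenvalue.\<close>
definition eigvals_desc :: "real mat \<Rightarrow> real list" where
  "eigvals_desc A = rev (sorted_list_of_multiset (proots (char_poly A)))"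

definition eig :: "real mat \<Rightarrow> nat \<Rightarrow> real" where
  "eig A i = eigvals_desc A ! (i - 1)"

definition psd :: "real mat \<Rightarrow> bool" where
  "psd B \<longleftrightarrow> B \<in> carrier_mat (dim_row B) (dim_row B) \<and> B\<^sup>T = B \<and>
     (\<forall>v \<in> carrier_vec (dim_row B). v \<bullet> (B *\<^sub>v v) \<ge> 0)"

definition outer :: "real vec \<Rightarrow> real mat" where
  "outer x = mat (dim_vec x) (dim_vec x) (\<lambda>(i, j). x $ i * x $ j)"

definition X_set :: "nat \<Rightarrow> real mat \<Rightarrow> real vec set" where
  "X_set n A = {x \<in> carrier_vec n. psd (outer x - A)}"

end

theory Submission
  imports Defs "HOL-Computational_Algebra.Fundamental_Theorem_Algebra"
begin

(* Write A = Q D Q\<^sup>T with Q orthogonal and D = diag(d\<^sub>1, ..., d\<^sub>n). The matrix x x\<^sup>T - A is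
  positive semidefinite iff v\<^sup>T A v \<le> (x \<bullet> v)\<^sup>2 for all v, and in the eigenbasis this asks for a
  vector c with \<Sum>\<^sub>k d\<^sub>k y\<^sub>k\<^sup>2 \<le> (c \<bullet> y)\<^sup>2 for all y. If two eigenvalues d\<^sub>i, d\<^sub>j are positive, a
  vector y supported on {i, j} and orthogonal to c violates this. If only d\<^sub>k can be positive,
  c = sqrt(d\<^sub>k) e\<^sub>k works. Sorting the eigenvalues, "at most one is positive" is exactly
  \<lambda>\<^sub>2 \<le> 0. The spectral theorem itself is proved by induction on n, splitting off a unit
  eigenvector with a Householder reflection. *)

section \<open>The spectral theorem for real symmetric matrices\<close>

lemma conjugate_of_real_mat_mult_vec:
  fixes A :: "real mat" and u :: "complex vec"
  assumes A: "A \<in> carrier_mat n n" and u: "u \<in> carrier_vec n"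
  shows "conjugate (map_mat complex_of_real A *\<^sub>v u) = map_mat complex_of_real A *\<^sub>v conjugate u"
proof (rule eq_vecI)
  fix i assume "i < dim_vec (map_mat complex_of_real A *\<^sub>v conjugate u)"
  hence i: "i < n" using A by simp
  let ?r = "row (map_mat complex_of_real A) i"
  have r: "?r \<in> carrier_vec n" and "conjugate ?r = ?r"
    using A i by (auto intro!: eq_vecI)
  hence "conjugate (?r \<bullet> u) = ?r \<bullet> conjugate u"
    using conjugate_sprod_vec[OF r u] by simp
  thus "conjugate (map_mat complex_of_real A *\<^sub>v u) $ i = (map_mat complex_of_real A *\<^sub>v conjugate u) $ i"
    using A u i by simp
qed (use A in auto)

lemma eigenvalue_of_real_symmetric_mat_is_real:
  fixes A :: "real mat" and z :: complex
  assumes A: "A \<in> carrier_mat n n" and sym: "A\<^sup>T = A"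
    and z: "eigenvalue (map_mat complex_of_real A) z"
  shows "z \<in> \<real>"
proof -
  let ?Ac = "map_mat complex_of_real A"
  have Ac: "?Ac \<in> carrier_mat n n" and AcT: "?Ac\<^sup>T = ?Ac"
    using A sym by (auto simp: map_mat_transpose)
  obtain u where "eigenvector ?Ac u z" using find_eigenvector[OF Ac z] by blast
  hence u: "u \<in> carrier_vec n" "u \<noteq> 0\<^sub>v n" and Au: "?Ac *\<^sub>v u = z \<cdot>\<^sub>v u"
    unfolding eigenvector_def using Ac by auto
  have "z * (u \<bullet>c u) = (?Ac *\<^sub>v u) \<bullet>c u" using u by (simp add: Au)
  also have "\<dots> = (?Ac\<^sup>T *\<^sub>v u) \<bullet> conjugate u" by (simp add: AcT)
  also have "\<dots> = u \<bullet> (?Ac *\<^sub>v conjugate u)"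
    using u by (intro transpose_vec_mult_scalar[OF Ac]) auto
  also have "\<dots> = cnj z * (u \<bullet>c u)"
    using u by (simp flip: conjugate_of_real_mat_mult_vec[OF A] add: Au conjugate_smult_vec)
  finally have "z = cnj z" using u by simp
  thus ?thesis using Reals_cnj_iff by metis
qed

lemma real_symmetric_mat_has_eigenvalue:
  fixes A :: "real mat"
  assumes A: "A \<in> carrier_mat n n" and sym: "A\<^sup>T = A" and n: "n > 0"
  shows "\<exists>e. eigenvalue A e"
proof -
  let ?Ac = "map_mat complex_of_real A"
  have Ac: "?Ac \<in> carrier_mat n n" using A by simp
  have cp: "char_poly ?Ac = map_poly complex_of_real (char_poly A)"
    by (rule of_real_hom.char_poly_hom[OF A])
  have "degree (char_poly ?Ac) = n" using degree_monic_char_poly[OF Ac] by simp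
  then obtain z where "poly (char_poly ?Ac) z = 0"
    using n fundamental_theorem_of_algebra constant_degree by (metis neq0_conv)
  hence z: "eigenvalue ?Ac z" using eigenvalue_root_char_poly[OF Ac] by simp
  then obtain e where "z = complex_of_real e"
    using eigenvalue_of_real_symmetric_mat_is_real[OF A sym] Reals_cases by metis
  hence "poly (char_poly A) e = 0"
    using z eigenvalue_root_char_poly[OF Ac] cp by (simp add: of_real_hom.poly_map_poly)
  thus ?thesis using eigenvalue_root_char_poly[OF A] by blast
qed

lemma real_symmetric_mat_unit_eigenvector:
  fixes A :: "real mat"
  assumes A: "A \<in> carrier_mat n n" and sym: "A\<^sup>T = A" and n: "n > 0"
  obtains e v where "v \<in> carrier_vec n" "v \<bullet> v = 1" "A *\<^sub>v v = e \<cdot>\<^sub>v v"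
proof -
  obtain e where "eigenvalue A e" using real_symmetric_mat_has_eigenvalue[OF assms] by blast
  then obtain u where "eigenvector A u e" using find_eigenvector[OF A] by blast
  hence u: "u \<in> carrier_vec n" "u \<noteq> 0\<^sub>v n" and Au: "A *\<^sub>v u = e \<cdot>\<^sub>v u"
    unfolding eigenvector_def using A by auto
  have uu: "u \<bullet> u > 0" using conjugate_square_greater_0_vec[OF u(1)] u(2) by simp
  let ?v = "(1 / sqrt (u \<bullet> u)) \<cdot>\<^sub>v u"
  have "?v \<bullet> ?v = 1" using u uu by (simp add: field_simps)
  moreover have "A *\<^sub>v ?v = e \<cdot>\<^sub>v ?v"
    using mult_mat_vec[OF A u(1)] Au by (simp add: smult_smult_assoc mult.commute)
  ultimately show ?thesis using that[of ?v e] u by simp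
qed

lemma outer_carrier_mat [simp]: "x \<in> carrier_vec n \<Longrightarrow> outer x \<in> carrier_mat n n"
  by (simp add: outer_def)

lemma transpose_outer [simp]: "(outer x)\<^sup>T = outer x"
  by (auto simp: outer_def)

lemma outer_mult_vec:
  fixes x v :: "real vec"
  assumes x: "x \<in> carrier_vec n" and v: "v \<in> carrier_vec n"
  shows "outer x *\<^sub>v v = (x \<bullet> v) \<cdot>\<^sub>v x"
proof (rule eq_vecI)
  fix i assume "i < dim_vec ((x \<bullet> v) \<cdot>\<^sub>v x)"
  hence i: "i < n" using x by simp
  have "(outer x *\<^sub>v v) $ i = (\<Sum>j = 0..<n. x $ i * x $ j * v $ j)"
    using x v i by (simp add: outer_def mult_mat_vec_def scalar_prod_def row_def)
  also have "\<dots> = x $ i * (x \<bullet> v)"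
    using x v by (simp add: scalar_prod_def sum_distrib_left mult.assoc)
  finally show "(outer x *\<^sub>v v) $ i = ((x \<bullet> v) \<cdot>\<^sub>v x) $ i" using i x by simp
qed (use x in \<open>auto simp: outer_def\<close>)

definition householder :: "real vec \<Rightarrow> real mat" where
  "householder w = 1\<^sub>m (dim_vec w) - (2 / (w \<bullet> w)) \<cdot>\<^sub>m outer w"

lemma householder_carrier_mat [simp]: "w \<in> carrier_vec n \<Longrightarrow> householder w \<in> carrier_mat n n"
  by (simp add: householder_def minus_carrier_mat)

lemma transpose_householder: "(householder w)\<^sup>T = householder w"
  by (rule eq_matI) (auto simp: householder_def outer_def mult.commute)

lemma smult_mat_mult_vec:
  fixes A :: "'a :: comm_ring mat"
  assumes "v \<in> carrier_vec (dim_col A)"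
  shows "(k \<cdot>\<^sub>m A) *\<^sub>v v = k \<cdot>\<^sub>v (A *\<^sub>v v)"
  using assms by (intro eq_vecI) (auto simp: smult_scalar_prod_distrib[of _ "dim_col A"])

lemma householder_mult_vec:
  assumes w: "w \<in> carrier_vec n" and y: "y \<in> carrier_vec n"
  shows "householder w *\<^sub>v y = y - (2 * (w \<bullet> y) / (w \<bullet> w)) \<cdot>\<^sub>v w"
proof -
  have "((2 / (w \<bullet> w)) \<cdot>\<^sub>m outer w) *\<^sub>v y = (2 * (w \<bullet> y) / (w \<bullet> w)) \<cdot>\<^sub>v w"
    using w y smult_mat_mult_vec[of y "outer w"] outer_mult_vec[OF w y]
      carrier_matD(2)[OF outer_carrier_mat[OF w]]
    by (simp add: smult_smult_assoc)
  thus ?thesis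
    using w y by (simp add: householder_def minus_mult_distrib_mat_vec[of _ n n])
qed

lemma householder_involution:
  assumes w: "w \<in> carrier_vec n" and w0: "w \<bullet> w \<noteq> 0"
  shows "householder w * householder w = 1\<^sub>m n"
proof -
  let ?H = "householder w"
  have H: "?H \<in> carrier_mat n n" using w by simp
  have HH: "?H *\<^sub>v (?H *\<^sub>v y) = y" if y: "y \<in> carrier_vec n" for y
  proof -
    have "w \<bullet> (?H *\<^sub>v y) = - (w \<bullet> y)"
      using w y w0 by (simp add: householder_mult_vec scalar_prod_minus_distrib[of _ n])
    thus ?thesis using w y w0 by (simp add: householder_mult_vec) (auto simp: field_simps)
  qed
  show ?thesis
  proof (rule mat_col_eqI)
    fix j assume "j < dim_col (1\<^sub>m n)"
    hence j: "j < n" by simp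
    have "col ?H j = ?H *\<^sub>v unit_vec n j"
      using col_mult2[OF H one_carrier_mat j] H j by simp
    thus "col (?H * ?H) j = col (1\<^sub>m n) j"
      using col_mult2[OF H H j] HH[of "unit_vec n j"] j by simp
  qed (use H in auto)
qed

lemma symmetric_involution_to_unit_vec:
  fixes v :: "real vec"
  assumes v: "v \<in> carrier_vec n" and v1: "v \<bullet> v = 1" and n: "0 < n"
  obtains H where "H \<in> carrier_mat n n" "H\<^sup>T = H" "H * H = 1\<^sub>m n" "H *\<^sub>v unit_vec n 0 = v"
proof (cases "v = unit_vec n 0")
  case True
  thus ?thesis using that[of "1\<^sub>m n"] by simp
next
  case False
  define w where "w = v - unit_vec n 0"
  have w: "w \<in> carrier_vec n" using v by (simp add: w_def)
  have "w \<noteq> 0\<^sub>v n"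
  proof
    assume "w = 0\<^sub>v n"
    hence "v $ i = unit_vec n 0 $ i" if "i < n" for i
      using that v unfolding w_def by (metis index_minus_vec(1) index_zero_vec(1) carrier_vecD
          right_minus_eq unit_vec_carrier)
    hence "v = unit_vec n 0" using v by (intro eq_vecI) auto
    thus False using False by simp
  qed
  hence w0: "w \<bullet> w \<noteq> 0" using conjugate_square_eq_0_vec[OF w] by simp
  have we: "w \<bullet> unit_vec n 0 = v $ 0 - 1"
    using v n by (simp add: w_def minus_scalar_prod_distrib[of _ n])
  have "w \<bullet> w = v \<bullet> w - unit_vec n 0 \<bullet> w"
    unfolding w_def using v by (simp add: minus_scalar_prod_distrib[of _ n])
  also have "\<dots> = (v \<bullet> v - v $ 0) - (v $ 0 - 1)"
    unfolding w_def using v n by (simp add: scalar_prod_minus_distrib[of _ n])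
  finally have ww: "w \<bullet> w = - 2 * (w \<bullet> unit_vec n 0)" using v1 we by simp
  have "householder w *\<^sub>v unit_vec n 0 = unit_vec n 0 + w"
    using w0 w ww n by (simp add: householder_mult_vec) (intro eq_vecI; simp)
  also have "\<dots> = v" using v by (auto simp: w_def)
  finally have "householder w *\<^sub>v unit_vec n 0 = v" .
  thus ?thesis
    using that[of "householder w"] w householder_involution[OF w w0] transpose_householder by simp
qed

lemma symmetric_mat_block_by_eigenvector_e0:
  fixes B :: "real mat"
  assumes B: "B \<in> carrier_mat (Suc m) (Suc m)" and sym: "B\<^sup>T = B"
    and Be: "B *\<^sub>v unit_vec (Suc m) 0 = e \<cdot>\<^sub>v unit_vec (Suc m) 0"
  obtains C where "C \<in> carrier_mat m m" "C\<^sup>T = C"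
    "B = four_block_mat (mat 1 1 (\<lambda>_. e)) (0\<^sub>m 1 m) (0\<^sub>m m 1) C"
proof
  let ?C = "mat m m (\<lambda>(i, j). B $$ (Suc i, Suc j))"
  have B_sym: "B $$ (j, i) = B $$ (i, j)" if "i < Suc m" "j < Suc m" for i j
    using sym that B by (metis carrier_matD index_transpose_mat(1))
  have col0: "B $$ (i, 0) = (if i = 0 then e else 0)" if "i < Suc m" for i
  proof -
    have "B $$ (i, 0) = (B *\<^sub>v unit_vec (Suc m) 0) $ i"
      using B that by (simp add: scalar_prod_right_unit)
    thus ?thesis using Be that by simp
  qed
  have row0: "B $$ (0, j) = (if j = 0 then e else 0)" if "j < Suc m" for j
    using col0 B_sym[OF that zero_less_Suc] that by simp
  show "?C \<in> carrier_mat m m" by simp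
  show "?C\<^sup>T = ?C" using B_sym by (intro eq_matI) auto
  show "B = four_block_mat (mat 1 1 (\<lambda>_. e)) (0\<^sub>m 1 m) (0\<^sub>m m 1) ?C"
  proof (rule eq_matI)
    fix i j assume "i < dim_row (four_block_mat (mat 1 1 (\<lambda>_. e)) (0\<^sub>m 1 m) (0\<^sub>m m 1) ?C)"
      "j < dim_col (four_block_mat (mat 1 1 (\<lambda>_. e)) (0\<^sub>m 1 m) (0\<^sub>m m 1) ?C)"
    hence "i < Suc m" "j < Suc m" by auto
    thus "B $$ (i, j) = four_block_mat (mat 1 1 (\<lambda>_. e)) (0\<^sub>m 1 m) (0\<^sub>m m 1) ?C $$ (i, j)"
      using col0 row0 by (cases "i = 0"; cases "j = 0") auto
  qed (use B in auto)
qed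

lemma mat_diag_Cons_four_block:
  "mat_diag (Suc m) ((!) (e # ds)) = four_block_mat (mat 1 1 (\<lambda>_. e)) (0\<^sub>m 1 m) (0\<^sub>m m 1) (mat_diag m ((!) ds))"
  by (rule eq_matI) (auto simp: mat_diag_def)

lemma orthogonal_mat_four_block_extension:
  fixes Q :: "real mat"
  assumes Q: "Q \<in> carrier_mat m m" and QQ: "Q\<^sup>T * Q = 1\<^sub>m m"
  defines "F \<equiv> four_block_mat (1\<^sub>m 1) (0\<^sub>m 1 m) (0\<^sub>m m 1) Q"
  shows "F \<in> carrier_mat (Suc m) (Suc m)" and "F\<^sup>T * F = 1\<^sub>m (Suc m)"
    and "F * mat_diag (Suc m) ((!) (e # ds)) * F\<^sup>T
         = four_block_mat (mat 1 1 (\<lambda>_. e)) (0\<^sub>m 1 m) (0\<^sub>m m 1) (Q * mat_diag m ((!) ds) * Q\<^sup>T)"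
proof -
  note mult_block = mult_four_block_mat[OF _ zero_carrier_mat zero_carrier_mat _ _ zero_carrier_mat zero_carrier_mat]
  have FT: "F\<^sup>T = four_block_mat (1\<^sub>m 1) (0\<^sub>m 1 m) (0\<^sub>m m 1) Q\<^sup>T"
    unfolding F_def by (subst transpose_four_block_mat[OF one_carrier_mat zero_carrier_mat zero_carrier_mat Q]) auto
  show "F \<in> carrier_mat (Suc m) (Suc m)"
    using four_block_carrier_mat[OF one_carrier_mat[of 1] Q] by (simp add: F_def)
  show "F\<^sup>T * F = 1\<^sub>m (Suc m)"
    unfolding FT unfolding F_def using Q by (subst mult_block) (auto simp: QQ)
  have "F * mat_diag (Suc m) ((!) (e # ds))
      = four_block_mat (mat 1 1 (\<lambda>_. e)) (0\<^sub>m 1 m) (0\<^sub>m m 1) (Q * mat_diag m ((!) ds))"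
    unfolding F_def mat_diag_Cons_four_block using Q
    by (subst mult_block) (auto simp: carrier_matD[OF mat_diag_dim])
  also have "\<dots> * F\<^sup>T
      = four_block_mat (mat 1 1 (\<lambda>_. e)) (0\<^sub>m 1 m) (0\<^sub>m m 1) (Q * mat_diag m ((!) ds) * Q\<^sup>T)"
  proof -
    have QD: "Q * mat_diag m ((!) ds) \<in> carrier_mat m m" using Q by simp
    show ?thesis unfolding FT using Q QD
      by (subst mult_block) (auto simp: right_mult_zero_mat[OF QD])
  qed
  finally show "F * mat_diag (Suc m) ((!) (e # ds)) * F\<^sup>T
      = four_block_mat (mat 1 1 (\<lambda>_. e)) (0\<^sub>m 1 m) (0\<^sub>m m 1) (Q * mat_diag m ((!) ds) * Q\<^sup>T)" .
qed

lemma symmetric_involution_conjugate_eigenvector: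
  fixes A H :: "real mat"
  assumes A: "A \<in> carrier_mat n n" and sym: "A\<^sup>T = A"
    and H: "H \<in> carrier_mat n n" and HT: "H\<^sup>T = H" and HH: "H * H = 1\<^sub>m n"
    and He: "H *\<^sub>v unit_vec n 0 = v" and v: "v \<in> carrier_vec n" and Av: "A *\<^sub>v v = e \<cdot>\<^sub>v v"
  shows "(H * A * H)\<^sup>T = H * A * H" and "(H * A * H) *\<^sub>v unit_vec n 0 = e \<cdot>\<^sub>v unit_vec n 0"
proof -
  have "(H * A * H)\<^sup>T = H\<^sup>T * (A\<^sup>T * H\<^sup>T)"
    using transpose_mult[OF mult_carrier_mat[OF H A] H] transpose_mult[OF H A] by simp
  thus "(H * A * H)\<^sup>T = H * A * H" unfolding HT sym using assoc_mult_mat[OF H A H] by simp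
  have "H *\<^sub>v v = (H * H) *\<^sub>v unit_vec n 0"
    using H by (simp add: assoc_mult_mat_vec[of _ n n _ n] flip: He)
  hence "H *\<^sub>v (e \<cdot>\<^sub>v v) = e \<cdot>\<^sub>v unit_vec n 0" using H v HH by (simp add: mult_mat_vec)
  moreover have "(H * A * H) *\<^sub>v unit_vec n 0 = H *\<^sub>v (A *\<^sub>v v)"
    using H A by (simp add: assoc_mult_mat_vec[of _ n n _ n] flip: He)
  ultimately show "(H * A * H) *\<^sub>v unit_vec n 0 = e \<cdot>\<^sub>v unit_vec n 0" by (simp add: Av)
qed

theorem real_symmetric_mat_orthogonal_diagonalization:
  fixes A :: "real mat"
  assumes "A \<in> carrier_mat n n" and "A\<^sup>T = A"
  shows "\<exists>Q ds. Q \<in> carrier_mat n n \<and> Q\<^sup>T * Q = 1\<^sub>m n \<and> length ds = n \<and>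
           A = Q * mat_diag n ((!) ds) * Q\<^sup>T"
  using assms
proof (induction n arbitrary: A)
  case 0
  thus ?case by (intro exI[of _ "1\<^sub>m 0"] exI[of _ "[]"]) (auto intro!: eq_matI)
next
  case (Suc m A)
  let ?n = "Suc m"
  have A: "A \<in> carrier_mat ?n ?n" and sym: "A\<^sup>T = A" by fact+
  obtain e v where v: "v \<in> carrier_vec ?n" "v \<bullet> v = 1" and Av: "A *\<^sub>v v = e \<cdot>\<^sub>v v"
    using real_symmetric_mat_unit_eigenvector[OF A sym] by blast
  obtain H where H: "H \<in> carrier_mat ?n ?n" and HT: "H\<^sup>T = H" and HH: "H * H = 1\<^sub>m ?n"
    and He: "H *\<^sub>v unit_vec ?n 0 = v"
    using symmetric_involution_to_unit_vec[OF v] by blast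
  define B where "B = H * A * H"
  have B: "B \<in> carrier_mat ?n ?n" using H A by (simp add: B_def)
  have BT: "B\<^sup>T = B" and "B *\<^sub>v unit_vec ?n 0 = e \<cdot>\<^sub>v unit_vec ?n 0"
    using symmetric_involution_conjugate_eigenvector[OF A sym H HT HH He v(1) Av] by (simp_all add: B_def)
  then obtain C where C: "C \<in> carrier_mat m m" "C\<^sup>T = C"
    and BC: "B = four_block_mat (mat 1 1 (\<lambda>_. e)) (0\<^sub>m 1 m) (0\<^sub>m m 1) C"
    using symmetric_mat_block_by_eigenvector_e0[OF B BT] by blast
  obtain P ds where P: "P \<in> carrier_mat m m" "P\<^sup>T * P = 1\<^sub>m m" and ds: "length ds = m"
    and CP: "C = P * mat_diag m ((!) ds) * P\<^sup>T"
    using Suc.IH[OF C] by blast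
  define F where "F = four_block_mat (1\<^sub>m 1) (0\<^sub>m 1 m) (0\<^sub>m m 1) P"
  have F: "F \<in> carrier_mat ?n ?n" and FF: "F\<^sup>T * F = 1\<^sub>m ?n"
    and FDF: "F * mat_diag ?n ((!) (e # ds)) * F\<^sup>T = B"
    using orthogonal_mat_four_block_extension(1,2)[OF P]
      orthogonal_mat_four_block_extension(3)[OF P, of e ds] BC CP by (simp_all add: F_def)
  define Q where "Q = H * F"
  have Q: "Q \<in> carrier_mat ?n ?n" using H F by (simp add: Q_def)
  have QT: "Q\<^sup>T = F\<^sup>T * H" using H F HT by (simp add: Q_def transpose_mult)
  have "Q\<^sup>T * Q = F\<^sup>T * (H * H) * F"
    unfolding QT unfolding Q_def using H F by (simp add: assoc_mult_mat[of _ ?n ?n _ ?n _ ?n])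
  hence "Q\<^sup>T * Q = 1\<^sub>m ?n" using HH FF F by simp
  moreover have "Q * mat_diag ?n ((!) (e # ds)) * Q\<^sup>T = H * B * H"
    unfolding QT unfolding Q_def FDF[symmetric]
    using H F by (simp add: assoc_mult_mat[of _ ?n ?n _ ?n _ ?n] mult_carrier_mat[of _ ?n ?n _ ?n])
  moreover have "H * B * H = (H * H) * A * (H * H)"
    unfolding B_def using H A by (simp add: assoc_mult_mat[of _ ?n ?n _ ?n _ ?n])
  hence "H * B * H = A" using A HH by simp
  ultimately show ?case using Q ds by (intro exI[of _ Q] exI[of _ "e # ds"]) auto
qed

section \<open>Eigenvalues of an orthogonally diagonalized matrix\<close>

lemma proots_prod_list_linear_factors:
  "proots (\<Prod>d\<leftarrow>ds. [:- d, 1:]) = mset (ds :: 'a :: idom list)"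
proof (induction ds)
  case (Cons d ds)
  have "(\<Prod>d\<leftarrow>ds. [:- d, 1:]) \<noteq> (0 :: 'a poly)" by (auto simp: prod_list_zero_iff)
  hence "proots ([:- d, 1:] * (\<Prod>d\<leftarrow>ds. [:- d, 1:]))
      = proots [:- d, 1:] + proots (\<Prod>d\<leftarrow>ds. [:- d, 1:])"
    by (intro proots_mult) auto
  thus ?case using Cons proots_linear_factor[of "-d"] by simp
qed simp

lemma eigvals_desc_orthogonal_diagonalization:
  fixes A Q :: "real mat"
  assumes A: "A \<in> carrier_mat n n" and Q: "Q \<in> carrier_mat n n" and QQ: "Q\<^sup>T * Q = 1\<^sub>m n"
    and ds: "length ds = n" and AQ: "A = Q * mat_diag n ((!) ds) * Q\<^sup>T"
  shows "eigvals_desc A = rev (sort ds)"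
proof -
  let ?D = "mat_diag n ((!) ds)"
  have "Q * Q\<^sup>T = 1\<^sub>m n" using mat_mult_left_right_inverse[OF _ Q QQ] Q by simp
  hence "similar_mat A ?D"
    unfolding similar_mat_def using similar_mat_witI[OF _ QQ AQ A] Q by fastforce
  hence "char_poly A = char_poly ?D" by (rule char_poly_similar)
  also have "\<dots> = (\<Prod>d\<leftarrow>ds. [:- d, 1:])"
  proof -
    have "upper_triangular ?D" by (auto simp: upper_triangular_def mat_diag_def)
    moreover have "diag_mat ?D = ds" using ds by (intro nth_equalityI) (auto simp: diag_mat_def mat_diag_def)
    ultimately show ?thesis using char_poly_upper_triangular[OF mat_diag_dim] by metis
  qed
  finally show ?thesis
    by (simp add: eigvals_desc_def proots_prod_list_linear_factors)
qed

section \<open>Quadratic forms bounded by the square of a linear form\<close>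

definition form_below_square :: "real mat \<Rightarrow> real vec \<Rightarrow> bool" where
  "form_below_square A x \<longleftrightarrow> (\<forall>v \<in> carrier_vec (dim_vec x). v \<bullet> (A *\<^sub>v v) \<le> (x \<bullet> v)\<^sup>2)"

lemma psd_outer_minus_iff:
  fixes A :: "real mat" and x :: "real vec"
  assumes A: "A \<in> carrier_mat n n" and sym: "A\<^sup>T = A" and x: "x \<in> carrier_vec n"
  shows "psd (outer x - A) \<longleftrightarrow> form_below_square A x"
proof -
  have M: "outer x - A \<in> carrier_mat n n" using A by (rule minus_carrier_mat)
  have "(outer x - A)\<^sup>T = outer x - A"
    using transpose_minus[OF outer_carrier_mat[OF x] A] sym by simp
  moreover have "v \<bullet> ((outer x - A) *\<^sub>v v) = (x \<bullet> v)\<^sup>2 - v \<bullet> (A *\<^sub>v v)"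
    if v: "v \<in> carrier_vec n" for v
    using A x v comm_scalar_prod[OF v x]
    by (simp add: minus_mult_distrib_mat_vec[of _ n n] scalar_prod_minus_distrib[of _ n]
        outer_mult_vec power2_eq_square)
  ultimately show ?thesis unfolding psd_def form_below_square_def using M A x by auto
qed

lemma congruence_quadratic_form:
  fixes Q D :: "'a :: comm_ring mat"
  assumes Q: "Q \<in> carrier_mat n m" and D: "D \<in> carrier_mat m m" and v: "v \<in> carrier_vec n"
  shows "v \<bullet> ((Q * D * Q\<^sup>T) *\<^sub>v v) = (Q\<^sup>T *\<^sub>v v) \<bullet> (D *\<^sub>v (Q\<^sup>T *\<^sub>v v))"
proof -
  have "(Q * D * Q\<^sup>T) *\<^sub>v v = Q *\<^sub>v (D *\<^sub>v (Q\<^sup>T *\<^sub>v v))"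
    using Q D v by (simp add: assoc_mult_mat_vec[of Q n m _ n] assoc_mult_mat_vec[of D m m _ n])
  moreover have "D *\<^sub>v (Q\<^sup>T *\<^sub>v v) \<in> carrier_vec m"
    using Q v by (intro mult_mat_vec_carrier[OF D]) simp
  ultimately show ?thesis using transpose_vec_mult_scalar[OF Q _ v] by metis
qed

lemma form_below_square_orthogonal_congruence:
  fixes Q D :: "real mat"
  assumes Q: "Q \<in> carrier_mat n n" and QQ: "Q\<^sup>T * Q = 1\<^sub>m n" and D: "D \<in> carrier_mat n n"
    and x: "x \<in> carrier_vec n"
  shows "form_below_square (Q * D * Q\<^sup>T) x \<longleftrightarrow> form_below_square D (Q\<^sup>T *\<^sub>v x)"
proof -
  have QQ': "Q * Q\<^sup>T = 1\<^sub>m n" using mat_mult_left_right_inverse[OF _ Q QQ] Q by simp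
  have inner: "(Q\<^sup>T *\<^sub>v x) \<bullet> (Q\<^sup>T *\<^sub>v v) = x \<bullet> v" if v: "v \<in> carrier_vec n" for v
    using transpose_vec_mult_scalar[OF Q _ x, of "Q\<^sup>T *\<^sub>v v"] Q x v QQ'
    by (simp add: assoc_mult_mat_vec[of _ n n _ n, symmetric])
  have QTQ: "Q\<^sup>T *\<^sub>v (Q *\<^sub>v y) = y" if y: "y \<in> carrier_vec n" for y
    using Q y QQ by (simp add: assoc_mult_mat_vec[of _ n n _ n, symmetric])
  show ?thesis
  proof
    assume below: "form_below_square (Q * D * Q\<^sup>T) x"
    show "form_below_square D (Q\<^sup>T *\<^sub>v x)"
      unfolding form_below_square_def
    proof
      fix y :: "real vec" assume "y \<in> carrier_vec (dim_vec (Q\<^sup>T *\<^sub>v x))"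
      hence y: "y \<in> carrier_vec n" using Q by simp
      have Qy: "Q *\<^sub>v y \<in> carrier_vec n" using Q y by simp
      have "(Q *\<^sub>v y) \<bullet> ((Q * D * Q\<^sup>T) *\<^sub>v (Q *\<^sub>v y)) \<le> (x \<bullet> (Q *\<^sub>v y))\<^sup>2"
        using below Qy x unfolding form_below_square_def by simp
      thus "y \<bullet> (D *\<^sub>v y) \<le> ((Q\<^sup>T *\<^sub>v x) \<bullet> y)\<^sup>2"
        by (simp add: congruence_quadratic_form[OF Q D Qy] QTQ[OF y] flip: inner[OF Qy])
    qed
  next
    assume below: "form_below_square D (Q\<^sup>T *\<^sub>v x)"
    show "form_below_square (Q * D * Q\<^sup>T) x"
      unfolding form_below_square_def
    proof
      fix v :: "real vec" assume "v \<in> carrier_vec (dim_vec x)"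
      hence v: "v \<in> carrier_vec n" using x by simp
      have "Q\<^sup>T *\<^sub>v v \<in> carrier_vec (dim_vec (Q\<^sup>T *\<^sub>v x))" using Q v by simp
      hence "(Q\<^sup>T *\<^sub>v v) \<bullet> (D *\<^sub>v (Q\<^sup>T *\<^sub>v v)) \<le> ((Q\<^sup>T *\<^sub>v x) \<bullet> (Q\<^sup>T *\<^sub>v v))\<^sup>2"
        using below unfolding form_below_square_def by blast
      thus "v \<bullet> ((Q * D * Q\<^sup>T) *\<^sub>v v) \<le> (x \<bullet> v)\<^sup>2"
        unfolding congruence_quadratic_form[OF Q D v] inner[OF v] .
    qed
  qed
qed

lemma mat_diag_quadratic_form:
  fixes d :: "nat \<Rightarrow> 'a :: comm_ring_1"
  assumes y: "y \<in> carrier_vec n"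
  shows "y \<bullet> (mat_diag n d *\<^sub>v y) = (\<Sum>k<n. d k * (y $ k)\<^sup>2)"
proof -
  have "mat_diag n d *\<^sub>v y = vec n (\<lambda>k. d k * y $ k)"
  proof (rule eq_vecI)
    fix i assume "i < dim_vec (vec n (\<lambda>k. d k * y $ k))"
    hence i: "i < n" by simp
    have "(mat_diag n d *\<^sub>v y) $ i = (\<Sum>j = 0..<n. (if i = j then d j else 0) * y $ j)"
      using y i by (simp add: mat_diag_def scalar_prod_def)
    also have "\<dots> = (\<Sum>j = 0..<n. if i = j then d j * y $ j else 0)" by (rule sum.cong) auto
    finally show "(mat_diag n d *\<^sub>v y) $ i = vec n (\<lambda>k. d k * y $ k) $ i" using i by simp
  qed (simp add: mat_diag_def)
  thus ?thesis using y by (simp add: scalar_prod_def lessThan_atLeast0 power2_eq_square ac_simps)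
qed

lemma sum_two_point_support:
  fixes f :: "nat \<Rightarrow> 'b :: zero \<Rightarrow> 'a :: comm_monoid_add"
  assumes "\<And>k. f k 0 = 0" and "i < n" "j < n" "i \<noteq> j"
  shows "(\<Sum>k<n. f k (if k = i then a else if k = j then b else 0)) = f i a + f j b"
proof -
  have "(\<Sum>k<n. f k (if k = i then a else if k = j then b else 0))
      = (\<Sum>k\<in>{i, j}. f k (if k = i then a else if k = j then b else 0))"
    using assms by (intro sum.mono_neutral_right) auto
  thus ?thesis using assms by simp
qed

lemma form_below_square_mat_diag_positive_unique:
  fixes d :: "nat \<Rightarrow> real"
  assumes c: "c \<in> carrier_vec n" and below: "form_below_square (mat_diag n d) c"
    and ij: "i < n" "j < n" and pos: "0 < d i" "0 < d j"
  shows "i = j"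
proof (rule ccontr)
  assume "i \<noteq> j"
  obtain a b where ab: "c $ i * a + c $ j * b = 0" and nz: "a \<noteq> 0 \<or> b \<noteq> 0"
  proof (cases "c $ i = 0 \<and> c $ j = 0")
    case True
    thus ?thesis using that[of 1 0] by simp
  next
    case False
    thus ?thesis using that[of "c $ j" "- c $ i"] by (auto simp: mult.commute)
  qed
  define y where "y = vec n (\<lambda>k. if k = i then a else if k = j then b else 0)"
  have y: "y \<in> carrier_vec n" by (simp add: y_def)
  have "c \<bullet> y = (\<Sum>k<n. c $ k * (if k = i then a else if k = j then b else 0))"
    using c by (simp add: y_def scalar_prod_def lessThan_atLeast0)
  also have "\<dots> = 0"
    using sum_two_point_support[of "\<lambda>k t. c $ k * t", OF _ ij \<open>i \<noteq> j\<close>] ab by simp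
  finally have cy: "c \<bullet> y = 0" .
  have "y \<bullet> (mat_diag n d *\<^sub>v y) = (\<Sum>k<n. d k * (if k = i then a else if k = j then b else 0)\<^sup>2)"
    unfolding mat_diag_quadratic_form[OF y] by (intro sum.cong) (auto simp: y_def)
  also have "\<dots> = d i * a\<^sup>2 + d j * b\<^sup>2"
    by (rule sum_two_point_support[of "\<lambda>k t. d k * t\<^sup>2", OF _ ij \<open>i \<noteq> j\<close>]) simp
  also have "\<dots> > 0" using pos nz by (auto intro: add_pos_nonneg add_nonneg_pos)
  finally show False using below y cy c unfolding form_below_square_def by fastforce
qed

lemma form_below_square_mat_diag_exists:
  fixes d :: "nat \<Rightarrow> real"
  assumes unique: "\<And>i j. i < n \<Longrightarrow> j < n \<Longrightarrow> 0 < d i \<Longrightarrow> 0 < d j \<Longrightarrow> i = j"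
  shows "\<exists>c \<in> carrier_vec n. form_below_square (mat_diag n d) c"
proof (cases "\<exists>k < n. 0 < d k")
  case True
  then obtain k where k: "k < n" "0 < d k" by blast
  let ?c = "sqrt (d k) \<cdot>\<^sub>v unit_vec n k"
  have "y \<bullet> (mat_diag n d *\<^sub>v y) \<le> (?c \<bullet> y)\<^sup>2" if y: "y \<in> carrier_vec n" for y
  proof -
    have "(\<Sum>i \<in> {..<n} - {k}. d i * (y $ i)\<^sup>2) \<le> 0"
      using unique k by (intro sum_nonpos mult_nonpos_nonneg) force+
    moreover have "(?c \<bullet> y)\<^sup>2 = d k * (y $ k)\<^sup>2"
      using y k by (simp add: power_mult_distrib)
    ultimately show ?thesis
      using k by (simp add: mat_diag_quadratic_form[OF y] sum.remove[of _ k])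
  qed
  thus ?thesis unfolding form_below_square_def by (intro bexI[of _ ?c]) auto
next
  case False
  have "y \<bullet> (mat_diag n d *\<^sub>v y) \<le> (0\<^sub>v n \<bullet> y)\<^sup>2" if y: "y \<in> carrier_vec n" for y
    using False y
    by (simp add: mat_diag_quadratic_form) (auto intro!: sum_nonpos mult_nonpos_nonneg simp: not_less)
  thus ?thesis unfolding form_below_square_def by (intro bexI[of _ "0\<^sub>v n"]) auto
qed

lemma ex_form_below_square_orthogonal_congruence:
  fixes Q D :: "real mat"
  assumes Q: "Q \<in> carrier_mat n n" and QQ: "Q\<^sup>T * Q = 1\<^sub>m n" and D: "D \<in> carrier_mat n n"
  shows "(\<exists>x \<in> carrier_vec n. form_below_square (Q * D * Q\<^sup>T) x)
    \<longleftrightarrow> (\<exists>c \<in> carrier_vec n. form_below_square D c)"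
proof
  assume "\<exists>x \<in> carrier_vec n. form_below_square (Q * D * Q\<^sup>T) x"
  thus "\<exists>c \<in> carrier_vec n. form_below_square D c"
    using form_below_square_orthogonal_congruence[OF Q QQ D] Q by fastforce
next
  assume "\<exists>c \<in> carrier_vec n. form_below_square D c"
  then obtain c where c: "c \<in> carrier_vec n" "form_below_square D c" by blast
  have "Q\<^sup>T *\<^sub>v (Q *\<^sub>v c) = c"
    using Q QQ c by (simp add: assoc_mult_mat_vec[of _ n n _ n, symmetric])
  thus "\<exists>x \<in> carrier_vec n. form_below_square (Q * D * Q\<^sup>T) x"
    using form_below_square_orthogonal_congruence[OF Q QQ D, of "Q *\<^sub>v c"] Q c by auto
qed

lemma ex_form_below_square_mat_diag_iff:
  fixes d :: "nat \<Rightarrow> real"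
  shows "(\<exists>c \<in> carrier_vec n. form_below_square (mat_diag n d) c)
    \<longleftrightarrow> (\<forall>i < n. \<forall>j < n. 0 < d i \<longrightarrow> 0 < d j \<longrightarrow> i = j)"
  using form_below_square_mat_diag_positive_unique form_below_square_mat_diag_exists by meson

section \<open>At most one positive entry\<close>

lemma at_most_one_positive_iff_length_filter:
  fixes xs :: "'a :: linordered_idom list"
  shows "(\<forall>i < length xs. \<forall>j < length xs. 0 < xs ! i \<longrightarrow> 0 < xs ! j \<longrightarrow> i = j)
    \<longleftrightarrow> length (filter ((<) 0) xs) \<le> 1"
  by (auto simp: length_filter_conv_card card_le_Suc0_iff_eq)

lemma at_most_one_positive_sort_iff:
  fixes xs :: "'a :: linordered_idom list"
  shows "(\<forall>i < length (sort xs). \<forall>j < length (sort xs). 0 < sort xs ! i \<longrightarrow> 0 < sort xs ! j \<longrightarrow> i = j)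
    \<longleftrightarrow> (\<forall>i < length xs. \<forall>j < length xs. 0 < xs ! i \<longrightarrow> 0 < xs ! j \<longrightarrow> i = j)"
proof -
  have "length (filter ((<) 0) (sort xs)) = length (filter ((<) 0) xs)"
    by (metis mset_filter mset_sort size_mset)
  thus ?thesis by (simp only: at_most_one_positive_iff_length_filter)
qed

lemma sorted_at_most_one_positive_iff:
  fixes xs :: "'a :: linordered_idom list"
  assumes sorted: "sorted xs" and len: "2 \<le> length xs"
  shows "xs ! (length xs - 2) \<le> 0
    \<longleftrightarrow> (\<forall>i < length xs. \<forall>j < length xs. 0 < xs ! i \<longrightarrow> 0 < xs ! j \<longrightarrow> i = j)"
proof
  assume nonpos: "xs ! (length xs - 2) \<le> 0"
  show "\<forall>i < length xs. \<forall>j < length xs. 0 < xs ! i \<longrightarrow> 0 < xs ! j \<longrightarrow> i = j"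
  proof (intro allI impI, rule ccontr)
    fix i j assume ij: "i < length xs" "j < length xs" "0 < xs ! i" "0 < xs ! j" "i \<noteq> j"
    hence "min i j \<le> length xs - 2" by linarith
    hence "xs ! min i j \<le> xs ! (length xs - 2)" using sorted len by (intro sorted_nth_mono) auto
    thus False using nonpos ij by (simp add: min_def split: if_splits)
  qed
next
  assume unique: "\<forall>i < length xs. \<forall>j < length xs. 0 < xs ! i \<longrightarrow> 0 < xs ! j \<longrightarrow> i = j"
  show "xs ! (length xs - 2) \<le> 0"
  proof (rule ccontr)
    assume "\<not> xs ! (length xs - 2) \<le> 0"
    moreover have "xs ! (length xs - 2) \<le> xs ! (length xs - 1)"
      using sorted len by (intro sorted_nth_mono) auto
    moreover have "length xs - 2 < length xs" "length xs - 1 < length xs"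
      "length xs - 2 \<noteq> length xs - 1" using len by auto
    ultimately show False using unique by force
  qed
qed

lemma second_largest_nonpos_iff:
  fixes xs :: "'a :: linordered_idom list"
  assumes "2 \<le> length xs"
  shows "rev (sort xs) ! 1 \<le> 0
    \<longleftrightarrow> (\<forall>i < length xs. \<forall>j < length xs. 0 < xs ! i \<longrightarrow> 0 < xs ! j \<longrightarrow> i = j)"
proof -
  have "rev (sort xs) ! 1 = sort xs ! (length (sort xs) - 2)"
    using assms by (simp add: rev_nth numeral_2_eq_2)
  thus ?thesis
    using sorted_at_most_one_positive_iff[of "sort xs"] at_most_one_positive_sort_iff assms by simp
qed

theorem lemma1:
  fixes n :: nat and A :: "real mat"
  assumes "n \<ge> 2" and "A \<in> carrier_mat n n" and "A\<^sup>T = A"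
  shows "X_set n A \<noteq> {} \<longleftrightarrow> eig A 2 \<le> 0"
proof -
  obtain Q ds where Q: "Q \<in> carrier_mat n n" "Q\<^sup>T * Q = 1\<^sub>m n" and ds: "length ds = n"
    and AQ: "A = Q * mat_diag n ((!) ds) * Q\<^sup>T"
    using real_symmetric_mat_orthogonal_diagonalization[OF assms(2,3)] by blast
  have "X_set n A \<noteq> {} \<longleftrightarrow> (\<exists>x \<in> carrier_vec n. form_below_square A x)"
    using psd_outer_minus_iff[OF assms(2,3)] by (auto simp: X_set_def)
  also have "\<dots> \<longleftrightarrow> (\<exists>c \<in> carrier_vec n. form_below_square (mat_diag n ((!) ds)) c)"
    unfolding AQ by (rule ex_form_below_square_orthogonal_congruence[OF Q mat_diag_dim])
  also have "\<dots> \<longleftrightarrow> (\<forall>i < n. \<forall>j < n. 0 < ds ! i \<longrightarrow> 0 < ds ! j \<longrightarrow> i = j)"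
    by (rule ex_form_below_square_mat_diag_iff)
  also have "\<dots> \<longleftrightarrow> rev (sort ds) ! 1 \<le> 0"
    using second_largest_nonpos_iff[of ds] ds assms(1) by simp
  also have "rev (sort ds) ! 1 = eig A 2"
    using eigvals_desc_orthogonal_diagonalization[OF assms(2) Q ds AQ] by (simp add: eig_def)
  finally show ?thesis .
qed

end
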